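(* Let $G=(X,\Sigma,\delta,X_0)$ be an NFA with observable events $\Sigma_o$ and a nonempty set of secret states $X_S\subseteq X$, and let $K\in\mathbb N$. Then $G$ is $K$-SSO w.r.t. $\Sigma_o$ and $X_S$ if and only if $G$ is $\min\{K,\ |\hat X|\,2^{|X\setminus X_S|}-1\}$-SSO w.r.t. $\Sigma_o$ and $X_S$, where $\hat X$ is the set of states of $G$ reachable from $X_S$.
   Context: An NFA is $G=(X,\Sigma,\delta,X_0)$ with finite state set $X$, finite event set $\Sigma$, initial states $X_0\subseteq X$, and transition function $\delta:X\times\Sigma\to 2^X$ extended to strings in the usual way. $\Sigma=\Sigma_o\dot\cup\Sigma_{uo}$, and $P:\Sigma^*\to\Sigma_o^*$ is the natural projection erasing unobservable events. $X_{NS}=X\setminus X_S$. A run $x_0\xrightarrow{s_1}x_1\cdots\xrightarrow{s_n}x_n$ means $x_{k+1}\in\delta(x_k,s_{k+1})$, written $x_0\xrightarrow{s}x_n$; it is non-secret if all its states lie in $X_{NS}$. $\hat X$ is the set of states $x$ with $x\in\delta(x_s,w)$ for some $x_s\in X_S$, $w\in\Sigma^*$ (including $X_S$ itself). $K$-SSO: $G$ is strongly $K$-step opaque w.r.t. $\Sigma_o$ and $X_S$ if for every run $x_0\xrightarrow{s}x_s\xrightarrow{t}x_t$ with $x_0\in X_0$, $x_s\in X_S$, $|P(t)|\le K$, there exists a run $x_0'\xrightarrow{s'}x_s'\xrightarrow{t'}x_t'$ with $x_0'\in X_0$, $P(s')=P(s)$, $P(t')=P(t)$, and the subrun $x_s'\xrightarrow{t'}x_t'$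 non-secret. *)

theory Defs
  imports Main
begin

text \<open>An NFA G = (X, Sig, delta, X0). A run x_0 -s_1-> x_1 ... -s_n-> x_n is
represented by its list of states xs = [x_0,...,x_n] and its event string
s = [s_1,...,s_n], with x_{k+1} in delta x_k s_{k+1}.\<close>

definition is_nfa :: "'x set \<Rightarrow> 'e set \<Rightarrow> ('x \<Rightarrow> 'e \<Rightarrow> 'x set) \<Rightarrow> 'x set \<Rightarrow> bool" where
  "is_nfa X Sig delta X0 \<longleftrightarrow> finite X \<and> finite Sig \<and> X0 \<subseteq> X \<and>
     (\<forall>x\<in>X. \<forall>e\<in>Sig. delta x e \<subseteq> X)"

definition is_run :: "'x set \<Rightarrow> 'e set \<Rightarrow> ('x \<Rightarrow> 'e \<Rightarrow> 'x set) \<Rightarrow> 'x list \<Rightarrow> 'e list \<Rightarrow> bool" where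
  "is_run X Sig delta xs s \<longleftrightarrow> length xs = Suc (length s) \<and> set xs \<subseteq> X \<and> set s \<subseteq> Sig \<and>
     (\<forall>k < length s. xs ! Suc k \<in> delta (xs ! k) (s ! k))"

definition proj :: "'e set \<Rightarrow> 'e list \<Rightarrow> 'e list" where
  "proj Sigma_o s = filter (\<lambda>e. e \<in> Sigma_o) s"

fun delta_star :: "('x \<Rightarrow> 'e \<Rightarrow> 'x set) \<Rightarrow> 'x \<Rightarrow> 'e list \<Rightarrow> 'x set" where
  "delta_star delta x [] = {x}"
| "delta_star delta x (e # w) = (\<Union>y\<in>delta x e. delta_star delta y w)"

definition X_hat :: "'x set \<Rightarrow> 'e set \<Rightarrow> ('x \<Rightarrow> 'e \<Rightarrow> 'x set) \<Rightarrow> 'x set \<Rightarrow> 'x set" where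
  "X_hat X Sig delta X_S = {x. \<exists>xs\<in>X_S. \<exists>w\<in>lists Sig. x \<in> delta_star delta xs w}"

text \<open>Strong K-step opacity. A run x_0 -s-> x_s -t-> x_t is given by the state
list xs @ ys where xs = [x_0..x_s] (run over s) and x_s # ys (run over t).\<close>
definition K_SSO :: "'x set \<Rightarrow> 'e set \<Rightarrow> ('x \<Rightarrow> 'e \<Rightarrow> 'x set) \<Rightarrow> 'x set \<Rightarrow> 'e set \<Rightarrow> 'x set \<Rightarrow> nat \<Rightarrow> bool" where
  "K_SSO X Sig delta X0 Sigma_o X_S K \<longleftrightarrow>
    (\<forall>xs s ys t. is_run X Sig delta xs s \<and> is_run X Sig delta (last xs # ys) t \<and>
        hd xs \<in> X0 \<and> last xs \<in> X_S \<and> length (proj Sigma_o t) \<le> K \<longrightarrow>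
      (\<exists>xs' s' ys' t'. is_run X Sig delta xs' s' \<and> is_run X Sig delta (last xs' # ys') t' \<and>
        hd xs' \<in> X0 \<and> proj Sigma_o s' = proj Sigma_o s \<and> proj Sigma_o t' = proj Sigma_o t \<and>
        set (last xs' # ys') \<subseteq> X - X_S))"

end

theory Submission
  imports Defs
begin

text \<open>Fix a secret state reached by a run and follow the rest of that run, whose observation
is w. Pair the state reached after observing the first i letters of w with the set of states
that some non-secret run from the current-state estimate reaches after those same i letters.
These pairs range over \<open>X_hat \<times> Pow (X - X_S)\<close>, so once \<open>|w|\<close> reaches the size of that set
two indices i < j carry equal pairs. Cutting out the piece between them yields a shorter run
from the same secret state, observed as \<open>take i w @ drop j w\<close>, and any non-secret run along
that observation can be continued along \<open>drop j w\<close> because the non-secret sets after i and j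
coincide. Strong induction on \<open>|w|\<close> then reduces K-SSO for every K to observations of length
below \<open>|X_hat| 2^|X - X_S|\<close>.\<close>

lemma run_nonempty: "is_run X Sig delta R t \<Longrightarrow> R \<noteq> []"
  unfolding is_run_def by auto

lemma run_take:
  assumes "is_run X Sig delta R t" "k \<le> length t"
  shows "is_run X Sig delta (take (Suc k) R) (take k t)"
  using assms unfolding is_run_def by (auto dest: in_set_takeD)

lemma run_drop:
  assumes "is_run X Sig delta R t" "k \<le> length t"
  shows "is_run X Sig delta (drop k R) (drop k t)"
  using assms unfolding is_run_def by (auto dest: in_set_dropD simp: add.commute)

lemma run_append:
  assumes r1: "is_run X Sig delta R1 u" and r2: "is_run X Sig delta R2 v" and "last R1 = hd R2"
  shows "is_run X Sig delta (R1 @ tl R2) (u @ v)"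
proof -
  have l1: "length R1 = Suc (length u)" and l2: "length R2 = Suc (length v)"
    using r1 r2 unfolding is_run_def by auto
  have shift: "(R1 @ tl R2) ! k = R2 ! (k - length u)"
    if "length u \<le> k" "k \<le> length u + length v" for k
  proof (cases "k = length u")
    case True
    have "R1 ! length u = last R1" "R2 ! 0 = hd R2"
      using l1 l2 by (simp_all add: last_conv_nth hd_conv_nth flip: length_greater_0_conv)
    then show ?thesis using True assms(3) l1 by (simp add: nth_append)
  next
    case False
    then have "k - length u = Suc (k - Suc (length u))" using that by simp
    with False that l1 l2 show ?thesis by (simp add: nth_append nth_tl)
  qed
  have "(R1 @ tl R2) ! Suc k \<in> delta ((R1 @ tl R2) ! k) ((u @ v) ! k)" if "k < length (u @ v)" for k
  proof (cases "k < length u")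
    case True
    then show ?thesis using r1 l1 unfolding is_run_def by (simp add: nth_append)
  next
    case False
    then have "(R1 @ tl R2) ! Suc k = R2 ! Suc (k - length u)" "(R1 @ tl R2) ! k = R2 ! (k - length u)"
      using that shift[of "Suc k"] shift[of k] by (simp_all add: Suc_diff_le)
    then show ?thesis using False that r2 unfolding is_run_def by (simp add: nth_append)
  qed
  moreover have "set (tl R2) \<subseteq> set R2" by (cases R2) auto
  ultimately show ?thesis using r1 r2 l1 l2 unfolding is_run_def by auto
qed

lemma run_splice:
  assumes "is_run X Sig delta R t" "i \<le> length t" "j \<le> length t" "R ! i = R ! j"
  shows "is_run X Sig delta (take (Suc i) R @ tl (drop j R)) (take i t @ drop j t)"
proof -
  have "length R = Suc (length t)" using assms(1) unfolding is_run_def by simp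
  then have "last (take (Suc i) R) = hd (drop j R)"
    using assms(2-4) by (simp add: take_Suc_conv_app_nth hd_drop_conv_nth)
  then show ?thesis using run_append[OF run_take[OF assms(1,2)] run_drop[OF assms(1,3)]] by simp
qed

lemma run_last_in_delta_star:
  "is_run X Sig delta R t \<Longrightarrow> last R \<in> delta_star delta (hd R) t"
proof (induction t arbitrary: R)
  case Nil
  then show ?case unfolding is_run_def by (cases R) auto
next
  case (Cons e t)
  then obtain x R' where R: "R = x # R'" using run_nonempty by (metis neq_Nil_conv)
  have r': "is_run X Sig delta R' t" using run_drop[OF Cons.prems, of 1] R by simp
  have "R' \<noteq> []" using r' by (rule run_nonempty)
  moreover have "hd R' \<in> delta x e" using Cons.prems R calculation unfolding is_run_def
    by (auto simp: hd_conv_nth)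
  ultimately show ?case using Cons.IH[OF r'] R by auto
qed

lemma proj_split:
  "proj P t = b @ c \<Longrightarrow> \<exists>k\<le>length t. proj P (take k t) = b \<and> proj P (drop k t) = c"
proof (induction t arbitrary: b)
  case Nil
  then show ?case by (simp add: proj_def)
next
  case (Cons e t)
  show ?case
  proof (cases "b = []")
    case True
    then show ?thesis using Cons.prems by (intro exI[of _ 0]) (simp add: proj_def)
  next
    case False
    then obtain b' where "proj P t = b' @ c" "b = (if e \<in> P then e # b' else b')"
      using Cons.prems by (cases b) (auto simp: proj_def split: if_splits)
    with Cons.IH show ?thesis by (fastforce simp: proj_def)
  qed
qed

lemma delta_star_subset:
  assumes "is_nfa X Sig delta X0" "x \<in> X" "w \<in> lists Sig"
  shows "delta_star delta x w \<subseteq> X"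
  using assms(2,3)
proof (induction w arbitrary: x)
  case Nil
  then show ?case by simp
next
  case (Cons e w)
  then have "delta x e \<subseteq> X" using assms(1) unfolding is_nfa_def by auto
  with Cons show ?case by auto
qed

lemma X_hat_subset:
  assumes "is_nfa X Sig delta X0" "X_S \<subseteq> X"
  shows "X_hat X Sig delta X_S \<subseteq> X"
  unfolding X_hat_def using delta_star_subset[OF assms(1)] assms(2) by blast

lemma run_last_in_X_hat:
  assumes "is_run X Sig delta R t" "hd R \<in> X_S"
  shows "last R \<in> X_hat X Sig delta X_S"
proof -
  have "t \<in> lists Sig" using assms(1) unfolding is_run_def by auto
  then show ?thesis unfolding X_hat_def using run_last_in_delta_star assms by blast
qed

lemma K_SSO_mono:
  "K_SSO X Sig delta X0 Sigma_o X_S K \<Longrightarrow> K' \<le> K \<Longrightarrow> K_SSO X Sig delta X0 Sigma_o X_S K'"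
  unfolding K_SSO_def using le_trans by blast

context
  fixes X :: "'x set" and Sig :: "'e set" and delta :: "'x \<Rightarrow> 'e \<Rightarrow> 'x set"
    and X0 :: "'x set" and Sigma_o :: "'e set" and X_S :: "'x set"
begin

definition current_estimate :: "'e list \<Rightarrow> 'x set" where
  "current_estimate a = {last R | R s. is_run X Sig delta R s \<and> hd R \<in> X0 \<and> proj Sigma_o s = a}"

definition nonsecret_reach :: "'x set \<Rightarrow> 'e list \<Rightarrow> 'x set" where
  "nonsecret_reach Q b =
     {last R | R t. is_run X Sig delta R t \<and> hd R \<in> Q \<and> proj Sigma_o t = b \<and> set R \<subseteq> X - X_S}"

lemma nonsecret_reach_subset: "nonsecret_reach Q b \<subseteq> X - X_S"
  unfolding nonsecret_reach_def using run_nonempty last_in_set by blast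

lemma nonsecret_reach_append:
  "nonsecret_reach Q (b @ c) = nonsecret_reach (nonsecret_reach Q b) c"
proof
  show "nonsecret_reach Q (b @ c) \<subseteq> nonsecret_reach (nonsecret_reach Q b) c"
  proof
    fix y assume "y \<in> nonsecret_reach Q (b @ c)"
    then obtain R t where R: "is_run X Sig delta R t" "hd R \<in> Q" "proj Sigma_o t = b @ c"
      "set R \<subseteq> X - X_S" "y = last R" unfolding nonsecret_reach_def by blast
    then obtain k where k: "k \<le> length t" "proj Sigma_o (take k t) = b" "proj Sigma_o (drop k t) = c"
      using proj_split by blast
    have len: "length R = Suc (length t)" using R(1) unfolding is_run_def by simp
    have "last (take (Suc k) R) \<in> nonsecret_reach Q b"
      unfolding nonsecret_reach_def using run_take[OF R(1) k(1)] R k len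
      by (fastforce dest: in_set_takeD)
    moreover have "last (take (Suc k) R) = hd (drop k R)"
      using k(1) len by (simp add: take_Suc_conv_app_nth hd_drop_conv_nth)
    moreover have "last (drop k R) = y" using R(5) k(1) len by simp
    ultimately show "y \<in> nonsecret_reach (nonsecret_reach Q b) c"
      unfolding nonsecret_reach_def[of "nonsecret_reach Q b"] using run_drop[OF R(1) k(1)] R k
      by (fastforce dest: in_set_dropD)
  qed
next
  show "nonsecret_reach (nonsecret_reach Q b) c \<subseteq> nonsecret_reach Q (b @ c)"
  proof
    fix y assume "y \<in> nonsecret_reach (nonsecret_reach Q b) c"
    then obtain R1 u R2 v where
      R1: "is_run X Sig delta R1 u" "hd R1 \<in> Q" "proj Sigma_o u = b" "set R1 \<subseteq> X - X_S" and
      R2: "is_run X Sig delta R2 v" "hd R2 = last R1" "proj Sigma_o v = c" "set R2 \<subseteq> X - X_S"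
        "y = last R2"
      unfolding nonsecret_reach_def mem_Collect_eq by blast
    have "R1 \<noteq> []" "R2 \<noteq> []" using R1(1) R2(1) run_nonempty by blast+
    then have "hd (R1 @ tl R2) = hd R1" "last (R1 @ tl R2) = last R2" "set (tl R2) \<subseteq> set R2"
      using R2(2) by (cases R2; auto)+
    moreover have "set (R1 @ tl R2) \<subseteq> X - X_S" using R1(4) R2(4) calculation(3) by auto
    moreover have "proj Sigma_o (u @ v) = b @ c" using R1(3) R2(3) by (simp add: proj_def)
    ultimately show "y \<in> nonsecret_reach Q (b @ c)"
      unfolding nonsecret_reach_def mem_Collect_eq
      using run_append[OF R1(1) R2(1) R2(2)[symmetric]] R1(2) R2(5) by metis
  qed
qed

lemma opacity_witness_iff_nonsecret_reach:
  "(\<exists>xs' s' ys' t'. is_run X Sig delta xs' s' \<and> is_run X Sig delta (last xs' # ys') t' \<and>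
      hd xs' \<in> X0 \<and> proj Sigma_o s' = a \<and> proj Sigma_o t' = b \<and> set (last xs' # ys') \<subseteq> X - X_S)
   \<longleftrightarrow> nonsecret_reach (current_estimate a) b \<noteq> {}"
proof
  assume "\<exists>xs' s' ys' t'. is_run X Sig delta xs' s' \<and> is_run X Sig delta (last xs' # ys') t' \<and>
      hd xs' \<in> X0 \<and> proj Sigma_o s' = a \<and> proj Sigma_o t' = b \<and> set (last xs' # ys') \<subseteq> X - X_S"
  then obtain xs' s' ys' t' where "is_run X Sig delta xs' s'" "is_run X Sig delta (last xs' # ys') t'"
      "hd xs' \<in> X0" "proj Sigma_o s' = a" "proj Sigma_o t' = b" "set (last xs' # ys') \<subseteq> X - X_S"
    by blast
  then have "last (last xs' # ys') \<in> nonsecret_reach (current_estimate a) b"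
    unfolding nonsecret_reach_def current_estimate_def by fastforce
  then show "nonsecret_reach (current_estimate a) b \<noteq> {}" by blast
next
  assume "nonsecret_reach (current_estimate a) b \<noteq> {}"
  then obtain y where "y \<in> nonsecret_reach (current_estimate a) b" by blast
  then obtain R1 s R2 t where "is_run X Sig delta R1 s" "hd R1 \<in> X0" "proj Sigma_o s = a"
      "is_run X Sig delta R2 t" "hd R2 = last R1" "proj Sigma_o t = b" "set R2 \<subseteq> X - X_S"
    unfolding nonsecret_reach_def current_estimate_def mem_Collect_eq by blast
  moreover have "last R1 # tl R2 = R2" using calculation(4,5) run_nonempty by (metis list.collapse)
  ultimately show "\<exists>xs' s' ys' t'. is_run X Sig delta xs' s' \<and> is_run X Sig delta (last xs' # ys') t' \<and>
      hd xs' \<in> X0 \<and> proj Sigma_o s' = a \<and> proj Sigma_o t' = b \<and> set (last xs' # ys') \<subseteq> X - X_S"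
    by (intro exI[of _ R1] exI[of _ s] exI[of _ "tl R2"] exI[of _ t]) simp
qed

lemma run_shortcut:
  assumes fin: "finite (X_hat X Sig delta X_S)" "finite X"
    and R: "is_run X Sig delta R t" "hd R \<in> X_S"
    and long: "card (X_hat X Sig delta X_S) * 2 ^ card (X - X_S) \<le> length (proj Sigma_o t)"
  obtains i j R' t' where "i < j" "j \<le> length (proj Sigma_o t)"
    "is_run X Sig delta R' t'" "hd R' = hd R"
    "proj Sigma_o t' = take i (proj Sigma_o t) @ drop j (proj Sigma_o t)"
    "nonsecret_reach Q (take i (proj Sigma_o t)) = nonsecret_reach Q (take j (proj Sigma_o t))"
proof -
  define w where "w = proj Sigma_o t"
  define m where "m = length w"
  have "\<forall>i. \<exists>k. i \<le> m \<longrightarrow>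
      k \<le> length t \<and> proj Sigma_o (take k t) = take i w \<and> proj Sigma_o (drop k t) = drop i w"
    using proj_split[of Sigma_o t] unfolding w_def by simp
  then obtain k where k: "\<And>i. i \<le> m \<Longrightarrow>
      k i \<le> length t \<and> proj Sigma_o (take (k i) t) = take i w \<and> proj Sigma_o (drop (k i) t) = drop i w"
    by metis
  have len: "length R = Suc (length t)" using R(1) unfolding is_run_def by simp
  have state: "R ! k i = last (take (Suc (k i)) R)" if "i \<le> m" for i
    using k[OF that] len by (simp add: take_Suc_conv_app_nth)
  define g where "g i = (R ! k i, nonsecret_reach Q (take i w))" for i
  have "g ` {..m} \<subseteq> X_hat X Sig delta X_S \<times> Pow (X - X_S)"
  proof
    fix z assume "z \<in> g ` {..m}"
    then obtain i where i: "i \<le> m" and z: "z = g i" by blast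
    have "hd (take (Suc (k i)) R) = hd R" using len by (cases R) auto
    then have "R ! k i \<in> X_hat X Sig delta X_S"
      using run_last_in_X_hat[OF run_take[OF R(1)]] R(2) k[OF i] state[OF i] by simp
    then show "z \<in> X_hat X Sig delta X_S \<times> Pow (X - X_S)"
      unfolding z g_def using nonsecret_reach_subset by blast
  qed
  moreover have "card (X_hat X Sig delta X_S \<times> Pow (X - X_S)) < card {..m}"
    using long fin by (simp add: card_cartesian_product card_Pow w_def m_def)
  ultimately have "\<not> inj_on g {..m}"
    using card_inj_on_le fin by (metis finite_Diff finite_Pow_iff finite_cartesian_product not_le)
  then obtain i j where ij: "i < j" "j \<le> m" "g i = g j"
    unfolding inj_on_def by (metis atMost_iff linorder_neqE_nat order.strict_trans1 less_imp_le)
  define R' where "R' = take (Suc (k i)) R @ tl (drop (k j) R)"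
  define t' where "t' = take (k i) t @ drop (k j) t"
  have "is_run X Sig delta R' t'"
    unfolding R'_def t'_def using run_splice[OF R(1)] k ij unfolding g_def by simp
  moreover have "hd R' = hd R" unfolding R'_def using len by (cases R) auto
  moreover have "proj Sigma_o t' = take i w @ drop j w"
    unfolding t'_def using k ij by (simp add: proj_def)
  moreover have "nonsecret_reach Q (take i w) = nonsecret_reach Q (take j w)"
    using ij unfolding g_def by simp
  ultimately show thesis using that ij unfolding m_def w_def by blast
qed

lemma nonsecret_reach_pumping:
  assumes fin: "finite (X_hat X Sig delta X_S)" "finite X" and "x \<in> X_S"
    and short: "\<And>R t. is_run X Sig delta R t \<Longrightarrow> hd R = x \<Longrightarrow>
        length (proj Sigma_o t) < card (X_hat X Sig delta X_S) * 2 ^ card (X - X_S) \<Longrightarrow>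
        nonsecret_reach Q (proj Sigma_o t) \<noteq> {}"
  shows "is_run X Sig delta R t \<Longrightarrow> hd R = x \<Longrightarrow> nonsecret_reach Q (proj Sigma_o t) \<noteq> {}"
proof (induction "length (proj Sigma_o t)" arbitrary: R t rule: less_induct)
  case less
  define w where "w = proj Sigma_o t"
  show ?case
  proof (cases "length w < card (X_hat X Sig delta X_S) * 2 ^ card (X - X_S)")
    case True
    then show ?thesis using short less.prems unfolding w_def by blast
  next
    case False
    then obtain i j R' t' where ij: "i < j" "j \<le> length w"
      and R': "is_run X Sig delta R' t'" "hd R' = hd R" "proj Sigma_o t' = take i w @ drop j w"
      and eq: "nonsecret_reach Q (take i w) = nonsecret_reach Q (take j w)"
      using run_shortcut[OF fin less.prems(1)] less.prems(2) \<open>x \<in> X_S\<close>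
      unfolding w_def by (metis not_less)
    have "nonsecret_reach Q w = nonsecret_reach (nonsecret_reach Q (take j w)) (drop j w)"
      by (simp flip: nonsecret_reach_append)
    also have "\<dots> = nonsecret_reach Q (take i w @ drop j w)"
      by (simp add: nonsecret_reach_append eq)
    also have "\<dots> \<noteq> {}"
      using less.hyps[OF _ R'(1)] R' less.prems(2) ij unfolding w_def by fastforce
    finally show ?thesis unfolding w_def .
  qed
qed

lemma K_SSO_of_bound:
  assumes nfa: "is_nfa X Sig delta X0" and "X_S \<subseteq> X"
    and bound: "K_SSO X Sig delta X0 Sigma_o X_S (card (X_hat X Sig delta X_S) * 2 ^ card (X - X_S) - 1)"
  shows "K_SSO X Sig delta X0 Sigma_o X_S K"
  unfolding K_SSO_def opacity_witness_iff_nonsecret_reach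
proof (intro allI impI)
  fix xs s ys t
  assume H: "is_run X Sig delta xs s \<and> is_run X Sig delta (last xs # ys) t \<and>
    hd xs \<in> X0 \<and> last xs \<in> X_S \<and> length (proj Sigma_o t) \<le> K"
  have fin: "finite X" using nfa unfolding is_nfa_def by simp
  then have fin_hat: "finite (X_hat X Sig delta X_S)"
    using X_hat_subset[OF nfa \<open>X_S \<subseteq> X\<close>] finite_subset by blast
  show "nonsecret_reach (current_estimate (proj Sigma_o s)) (proj Sigma_o t) \<noteq> {}"
  proof (rule nonsecret_reach_pumping[OF fin_hat fin, where x = "last xs" and R = "last xs # ys"])
    fix R' t'
    assume R': "is_run X Sig delta R' t'" "hd R' = last xs"
      "length (proj Sigma_o t') < card (X_hat X Sig delta X_S) * 2 ^ card (X - X_S)"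
    have "last xs # tl R' = R'" using R' run_nonempty by (metis list.collapse)
    then show "nonsecret_reach (current_estimate (proj Sigma_o s)) (proj Sigma_o t') \<noteq> {}"
      using bound[unfolded K_SSO_def opacity_witness_iff_nonsecret_reach, rule_format, of xs s "tl R'" t']
        H R' by simp
  qed (use H in simp_all)
qed

end

theorem corollary3p1:
  fixes X :: "'x set" and Sig Sigma_o :: "'e set" and delta :: "'x \<Rightarrow> 'e \<Rightarrow> 'x set"
    and X0 X_S :: "'x set" and K :: nat
  assumes "is_nfa X Sig delta X0"
    and "Sigma_o \<subseteq> Sig"
    and "X_S \<subseteq> X" and "X_S \<noteq> {}"
  shows "K_SSO X Sig delta X0 Sigma_o X_S K \<longleftrightarrow>
         K_SSO X Sig delta X0 Sigma_o X_S
           (min K (card (X_hat X Sig delta X_S) * 2 ^ card (X - X_S) - 1))"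
proof
  assume "K_SSO X Sig delta X0 Sigma_o X_S K"
  then show "K_SSO X Sig delta X0 Sigma_o X_S
      (min K (card (X_hat X Sig delta X_S) * 2 ^ card (X - X_S) - 1))"
    by (rule K_SSO_mono) simp
next
  assume "K_SSO X Sig delta X0 Sigma_o X_S
      (min K (card (X_hat X Sig delta X_S) * 2 ^ card (X - X_S) - 1))"
  then show "K_SSO X Sig delta X0 Sigma_o X_S K"
    using K_SSO_of_bound[OF assms(1,3)]
    by (cases "K \<le> card (X_hat X Sig delta X_S) * 2 ^ card (X - X_S) - 1") (simp_all add: min_def)
qed

end
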